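(* For every non-negative integer $n$, $$\sum_{k=1}^{2n}\frac{(-1)^k}{k}\binom{2n}{k}\binom{2n+1+k}{k}=-2H_{2n},$$ and $$\sum_{k=1}^{n}\frac{(-1)^k}{k}\binom{n}{k}\binom{n+1+k}{k}H_k=2\left(\sum_{k=1}^n\frac{(-1)^k}{k^2}+\frac{(-1)^n}{n+1}H_n\right).$$
   Context: $H_n=\sum_{k=1}^n \frac{1}{k}$ denotes the $n$th harmonic number, with $H_0=0$; empty sums are $0$. *)

theory Defs
  imports "HOL-Analysis.Analysis"
begin

end

theory Submission
  imports Defs
begin

(* Absorbing k into binom(m,k) and binom(a+k,k) gives, for every weight w, a recurrence in m that
   trades the factor 1/k for a sum  sum_k (-1)^k binom(m+1,k) binom(a+k,k) w(k)  without it.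
   For w = 1 these sums follow from the iterated Pascal difference
   sum_i (-1)^i binom(p,i) binom(q+i,r) = (-1)^p binom(q,r-p); for w(k) = H_k one first expands
   H_k = sum_j (-1)^(j+1) binom(k,j)/j and exchanges the two sums. Induction on m then gives both
   identities for every m, the first one with a correction -(1-(-1)^m)/(m+1) vanishing for even m. *)

lemma alternating_sum_choose_Suc:
  fixes a :: "nat \<Rightarrow> 'a::comm_ring_1"
  shows "(\<Sum>i\<le>Suc p. (-1)^i * of_nat (Suc p choose i) * a i)
       = (\<Sum>i\<le>p. (-1)^i * of_nat (p choose i) * (a i - a (Suc i)))"
proof -
  have pascal: "(-1)^Suc i * of_nat (Suc p choose Suc i) * a (Suc i)
      = (-1)^Suc i * of_nat (p choose Suc i) * a (Suc i) - (-1)^i * of_nat (p choose i) * a (Suc i)" for i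
    by (simp add: algebra_simps)
  have "(\<Sum>i\<le>Suc p. (-1)^i * of_nat (Suc p choose i) * a i)
      = a 0 + (\<Sum>i\<le>p. (-1)^Suc i * of_nat (p choose Suc i) * a (Suc i))
        - (\<Sum>i\<le>p. (-1)^i * of_nat (p choose i) * a (Suc i))"
    by (simp only: sum.atMost_Suc_shift pascal sum_subtractf) simp
  also have "a 0 + (\<Sum>i\<le>p. (-1)^Suc i * of_nat (p choose Suc i) * a (Suc i))
      = (\<Sum>i\<le>p. (-1)^i * of_nat (p choose i) * a i)"
    using sum.atMost_Suc_shift[of "\<lambda>i. (-1)^i * of_nat (p choose i) * a i" p]
    by (simp add: binomial_eq_0)
  finally show ?thesis
    by (simp add: sum_subtractf algebra_simps)
qed

lemma alternating_sum_choose_shift_choose: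
  "(\<Sum>i\<le>p. (-1)^i * of_nat (p choose i) * of_nat ((q + i) choose r))
     = (-1)^p * (if p \<le> r then of_nat (q choose (r - p)) else (0::'a::comm_ring_1))"
proof (induction p arbitrary: q)
  case 0
  then show ?case by simp
next
  case (Suc p)
  have "(\<Sum>i\<le>Suc p. (-1)^i * of_nat (Suc p choose i) * of_nat ((q + i) choose r))
      = (\<Sum>i\<le>p. (-1)^i * of_nat (p choose i) * of_nat ((q + i) choose r))
        - (\<Sum>i\<le>p. (-1)^i * of_nat (p choose i) * of_nat ((Suc q + i) choose r) :: 'a)"
    unfolding alternating_sum_choose_Suc by (simp add: sum_subtractf algebra_simps)
  also have "\<dots> = (-1)^p * ((if p \<le> r then of_nat (q choose (r - p)) else 0)
      - (if p \<le> r then of_nat (Suc q choose (r - p)) else 0))"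
    by (simp only: Suc.IH right_diff_distrib)
  also have "\<dots> = (-1)^Suc p * (if Suc p \<le> r then of_nat (q choose (r - Suc p)) else 0)"
  proof (cases "Suc p \<le> r")
    case True
    then have "r - p = Suc (r - Suc p)" by simp
    then show ?thesis using True by (simp add: algebra_simps)
  qed (auto simp: le_Suc_eq)
  finally show ?case .
qed

lemma choose_add_swap: "(m + k) choose k = (m + k) choose m"
  using binomial_symmetric[of k "m + k"] by simp

lemma alternating_sum_choose_choose_add:
  "(\<Sum>k\<le>p. (-1)^k * of_nat (p choose k) * of_nat ((n + k) choose k))
     = (-1)^p * (if p \<le> n then of_nat (n choose p) else (0::'a::comm_ring_1))"
proof -
  have "(\<Sum>k\<le>p. (-1)^k * of_nat (p choose k) * of_nat ((n + k) choose k))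
      = (\<Sum>k\<le>p. (-1)^k * of_nat (p choose k) * (of_nat ((n + k) choose n) :: 'a))"
    by (intro sum.cong refl) (simp only: choose_add_swap[of n])
  then show ?thesis
    using alternating_sum_choose_shift_choose[of p n n, where 'a = 'a]
    by (simp add: binomial_symmetric[of p n, symmetric])
qed

lemma alternating_sum_choose_choose_choose:
  assumes "j \<le> n"
  shows "(\<Sum>k\<le>n. (-1)^k * of_nat (n choose k) * of_nat ((n + k) choose k) * of_nat (k choose j))
       = (-1)^n * of_nat (n choose j) * (of_nat ((n + j) choose j) :: 'a::comm_ring_1)"
proof -
  let ?f = "\<lambda>k. (-1)^k * of_nat (n choose k) * of_nat ((n + k) choose k) * (of_nat (k choose j) :: 'a)"
  have "(\<Sum>k\<le>n. ?f k) = (\<Sum>k\<in>{j..n}. ?f k)"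
    by (rule sum.mono_neutral_right) (auto simp: binomial_eq_0)
  also have "\<dots> = (\<Sum>i\<le>n - j. ?f (i + j))"
    using sum.shift_bounds_cl_nat_ivl[of ?f 0 j "n - j"] assms by (simp add: atMost_atLeast0)
  also have "\<dots> = (-1)^j * of_nat (n choose j) *
      (\<Sum>i\<le>n - j. (-1)^i * of_nat ((n - j) choose i) * of_nat ((n + j + i) choose n))"
    unfolding sum_distrib_left
  proof (intro sum.cong refl)
    fix i assume "i \<in> {..n - j}"
    then have "i + j \<le> n" using assms by auto
    then have mult: "(n choose (i + j)) * ((i + j) choose j) = (n choose j) * ((n - j) choose i)"
      using choose_mult[of j "i + j" n] by simp
    have swap: "(n + (i + j)) choose (i + j) = (n + j + i) choose n"
      using choose_add_swap[of n "i + j"] by (simp add: add_ac)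
    have "?f (i + j) = (-1)^(i + j) * of_nat ((n choose (i + j)) * ((i + j) choose j))
        * of_nat ((n + (i + j)) choose (i + j))"
      by (simp add: algebra_simps)
    also have "\<dots> = (-1)^(i + j) * of_nat ((n choose j) * ((n - j) choose i)) * of_nat ((n + j + i) choose n)"
      by (simp only: mult swap)
    finally show "?f (i + j) = (-1)^j * of_nat (n choose j) *
        ((-1)^i * of_nat ((n - j) choose i) * of_nat ((n + j + i) choose n))"
      by (simp add: power_add algebra_simps)
  qed
  also have "\<dots> = (-1)^j * of_nat (n choose j) * ((-1)^(n - j) * of_nat ((n + j) choose j))"
    using alternating_sum_choose_shift_choose[of "n - j" "n + j" n, where 'a = 'a] assms by simp
  also have "\<dots> = (-1)^(j + (n - j)) * of_nat (n choose j) * of_nat ((n + j) choose j)"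
    by (simp add: power_add)
  finally show ?thesis
    using assms by simp
qed

lemma choose_Suc_div:
  assumes "k \<ge> 1"
  shows "real (Suc n choose k) / real k = real (n choose k) / real k + real (Suc n choose k) / real (Suc n)"
proof -
  obtain i where k: "k = Suc i" using assms by (cases k) auto
  have "real (Suc n choose k) / real k = real (n choose k) / real k + real (n choose i) / real k"
    unfolding k by (simp add: add_divide_distrib)
  also have "real (n choose i) / real k = real (Suc n choose k) / real (Suc n)"
    using Suc_times_binomial[of i n] unfolding k
    by (simp add: field_simps del: binomial_Suc_Suc of_nat_Suc flip: of_nat_mult)
  finally show ?thesis .
qed

lemma harm_eq_alternating_sum_choose:
  "(harm n :: real) = (\<Sum>k=1..n. (-1)^Suc k * real (n choose k) / real k)"
proof (induction n)
  case 0
  then show ?case by (simp add: harm_expand)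
next
  case (Suc n)
  have "(\<Sum>k=1..Suc n. (-1)^Suc k * real (Suc n choose k) / real k)
      = (\<Sum>k=1..Suc n. (-1)^Suc k * real (n choose k) / real k
          + (-1)^Suc k * real (Suc n choose k) / real (Suc n))"
    by (intro sum.cong refl) (simp add: choose_Suc_div distrib_left flip: times_divide_eq_right)
  also have "\<dots> = (\<Sum>k=1..Suc n. (-1)^Suc k * real (n choose k) / real k)
      + (\<Sum>k=1..Suc n. (-1)^Suc k * real (Suc n choose k)) / real (Suc n)"
    by (simp only: sum.distrib sum_divide_distrib)
  also have "(\<Sum>k=1..Suc n. (-1)^Suc k * real (n choose k) / real k) = harm n"
    by (simp add: Suc.IH binomial_eq_0)
  also have "(\<Sum>k=1..Suc n. (-1)^Suc k * real (Suc n choose k)) = 1"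
    using choose_alternating_sum[of "Suc n", where 'a = real]
    by (simp add: atMost_atLeast0 sum.atLeast_Suc_atMost sum_negf)
  finally show ?case by (simp add: harm_Suc divide_inverse)
qed

lemma choose_choose_div_Suc:
  assumes "1 \<le> k" "k \<le> Suc m"
  shows "(-1)^k / real k * real (Suc m choose k) * real ((Suc a + k) choose k)
       = (-1)^k / real k * real (m choose k) * real ((a + k) choose k)
         + (1 / real (Suc m) + 1 / real (Suc a)) * ((-1)^k * real (Suc m choose k) * real ((a + k) choose k))"
proof -
  have "(Suc m - k) * (Suc m choose k) = Suc m * (m choose k)"
    using binomial_absorb_comp[of "Suc m" k] by simp
  then have "(real (Suc m) - real k) * real (Suc m choose k) = real (Suc m) * real (m choose k)"
    using assms(2) by (metis of_nat_diff of_nat_mult)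
  then have m: "real (m choose k) = (real (Suc m) - real k) / real (Suc m) * real (Suc m choose k)"
    by (simp add: field_simps del: of_nat_Suc)
  have "(Suc a + k - k) * (Suc a + k choose k) = (Suc a + k) * ((a + k) choose k)"
    using binomial_absorb_comp[of "Suc a + k" k] by simp
  then have "real (Suc a) * real (Suc a + k choose k) = (real (Suc a) + real k) * real ((a + k) choose k)"
    by (metis add_diff_cancel_right' of_nat_add of_nat_mult)
  then have a: "real ((Suc a + k) choose k) = (real (Suc a) + real k) / real (Suc a) * real ((a + k) choose k)"
    by (simp add: field_simps del: of_nat_Suc)
  show ?thesis
    unfolding m a using assms(1) by (simp add: field_simps del: of_nat_Suc)
qed

lemma sum_choose_choose_div_Suc:
  fixes w :: "nat \<Rightarrow> real"
  shows "(\<Sum>k=1..Suc m. (-1)^k / real k * real (Suc m choose k) * real ((Suc a + k) choose k) * w k)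
       = (\<Sum>k=1..m. (-1)^k / real k * real (m choose k) * real ((a + k) choose k) * w k)
         + (1 / real (Suc m) + 1 / real (Suc a))
           * (\<Sum>k=1..Suc m. (-1)^k * real (Suc m choose k) * real ((a + k) choose k) * w k)"
proof -
  have "(\<Sum>k=1..Suc m. (-1)^k / real k * real (Suc m choose k) * real ((Suc a + k) choose k) * w k)
      = (\<Sum>k=1..Suc m. (-1)^k / real k * real (m choose k) * real ((a + k) choose k) * w k
          + (1 / real (Suc m) + 1 / real (Suc a))
            * ((-1)^k * real (Suc m choose k) * real ((a + k) choose k) * w k))"
    (is "sum ?lhs _ = sum ?rhs _")
  proof (intro sum.cong refl)
    fix k assume "k \<in> {1..Suc m}"
    then have "1 \<le> k" "k \<le> Suc m" by auto
    then show "?lhs k = ?rhs k"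
      by (simp only: choose_choose_div_Suc distrib_right)
  qed
  also have "\<dots> = (\<Sum>k=1..Suc m. (-1)^k / real k * real (m choose k) * real ((a + k) choose k) * w k)
        + (1 / real (Suc m) + 1 / real (Suc a))
          * (\<Sum>k=1..Suc m. (-1)^k * real (Suc m choose k) * real ((a + k) choose k) * w k)"
    by (simp only: sum.distrib sum_distrib_left)
  finally show ?thesis
    by (simp add: binomial_eq_0)
qed

lemma sum_choose_choose_div:
  "(\<Sum>k=1..n. (-1)^k / real k * real (n choose k) * real ((n + k) choose k)) = - 2 * harm n"
proof (induction n)
  case 0
  then show ?case by (simp add: harm_expand)
next
  case (Suc n)
  have kernel: "(\<Sum>k=1..Suc n. (-1)^k * real (Suc n choose k) * real ((n + k) choose k)) = -1"
    using alternating_sum_choose_choose_add[of "Suc n" n, where 'a = real]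
    by (simp add: atMost_atLeast0 sum.atLeast_Suc_atMost del: sum.cl_ivl_Suc)
  show ?case
    using sum_choose_choose_div_Suc[of n n "\<lambda>_. 1"]
    unfolding mult_1_right Suc.IH kernel by (simp add: harm_Suc field_simps del: of_nat_Suc)
qed

lemma alternating_sum_choose_choose_harm:
  "(\<Sum>k\<le>n. (-1)^k * real (n choose k) * real ((n + k) choose k) * harm k) = 2 * (-1)^n * harm n"
proof -
  let ?g = "\<lambda>k. (-1)^k * real (n choose k) * real ((n + k) choose k)"
  have harm_as_sum: "harm k = (\<Sum>j=1..n. (-1)^Suc j * real (k choose j) / real j)" if "k \<le> n" for k
    unfolding harm_eq_alternating_sum_choose
    by (rule sum.mono_neutral_left) (use that in \<open>auto simp: binomial_eq_0\<close>)
  have "(\<Sum>k\<le>n. ?g k * harm k) = (\<Sum>k\<le>n. \<Sum>j=1..n. ?g k * ((-1)^Suc j * real (k choose j) / real j))"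
    by (intro sum.cong refl) (simp add: harm_as_sum sum_distrib_left)
  also have "\<dots> = (\<Sum>j=1..n. (-1)^Suc j / real j * (\<Sum>k\<le>n. ?g k * real (k choose j)))"
    by (subst sum.swap) (simp add: sum_distrib_left algebra_simps)
  also have "\<dots> = (\<Sum>j=1..n. (-1)^Suc j / real j * ((-1)^n * real (n choose j) * real ((n + j) choose j)))"
    by (intro sum.cong refl) (simp add: alternating_sum_choose_choose_choose)
  also have "\<dots> = (-1)^Suc n * (\<Sum>j=1..n. (-1)^j / real j * real (n choose j) * real ((n + j) choose j))"
    by (simp add: sum_distrib_left algebra_simps)
  also have "\<dots> = 2 * (-1)^n * harm n"
    unfolding sum_choose_choose_div by simp
  finally show ?thesis .
qed

lemma sum_choose_choose_Suc_div:
  "(\<Sum>k=1..n. (-1)^k / real k * real (n choose k) * real ((Suc n + k) choose k))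
     = - 2 * harm n - (1 - (-1)^n) / real (Suc n)"
proof (induction n)
  case 0
  then show ?case by (simp add: harm_expand)
next
  case (Suc n)
  have kernel: "(\<Sum>k=1..Suc n. (-1)^k * real (Suc n choose k) * real ((Suc n + k) choose k)) = (-1)^Suc n - 1"
    using alternating_sum_choose_choose_add[of "Suc n" "Suc n", where 'a = real]
    by (simp add: atMost_atLeast0 sum.atLeast_Suc_atMost del: sum.cl_ivl_Suc)
  have recurrence:
    "(\<Sum>k=1..Suc n. (-1)^k / real k * real (Suc n choose k) * real ((Suc (Suc n) + k) choose k))
      = (\<Sum>k=1..n. (-1)^k / real k * real (n choose k) * real ((Suc n + k) choose k))
        + (1 / real (Suc n) + 1 / real (Suc (Suc n)))
          * (\<Sum>k=1..Suc n. (-1)^k * real (Suc n choose k) * real ((Suc n + k) choose k))"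
    using sum_choose_choose_div_Suc[of n "Suc n" "\<lambda>_. 1"] by (simp only: mult_1_right)
  show ?case
    unfolding recurrence Suc.IH kernel by (simp add: harm_Suc field_simps del: of_nat_Suc)
qed

lemma sum_choose_choose_Suc_div_harm:
  "(\<Sum>k=1..n. (-1)^k / real k * real (n choose k) * real ((Suc n + k) choose k) * harm k)
     = 2 * ((\<Sum>k=1..n. (-1)^k / (real k)^2) + (-1)^n / real (Suc n) * harm n)"
proof (induction n)
  case 0
  then show ?case by (simp add: harm_expand)
next
  case (Suc n)
  have kernel: "(\<Sum>k=1..Suc n. (-1)^k * real (Suc n choose k) * real ((Suc n + k) choose k) * harm k)
      = 2 * (-1)^Suc n * harm (Suc n)"
    using alternating_sum_choose_choose_harm[of "Suc n"]
    by (simp add: harm_expand atMost_atLeast0 sum.atLeast_Suc_atMost del: sum.cl_ivl_Suc)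
  show ?case
    using sum_choose_choose_div_Suc[of n "Suc n" harm]
    unfolding Suc.IH kernel
    by (simp add: harm_Suc field_simps power2_eq_square del: of_nat_Suc)
qed

theorem lemma3p1:
  fixes n :: nat
  shows "((\<Sum>k=1..2*n. (-1::real)^k / real k * real ((2*n) choose k) * real ((2*n+1+k) choose k))
           = - 2 * (harm (2*n) :: real)) \<and>
         ((\<Sum>k=1..n. (-1::real)^k / real k * real (n choose k) * real ((n+1+k) choose k) * (harm k :: real))
           = 2 * ((\<Sum>k=1..n. (-1::real)^k / (real k)^2) + (-1::real)^n / real (n+1) * harm n))"
  using sum_choose_choose_Suc_div[of "2 * n"] sum_choose_choose_Suc_div_harm[of n] by simp

end
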